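(* Let $I$ be an index set, $S,T\in GL(2,\mathbb C)$, and for $r\in I$ let $P_r=S\,\mathrm{diag}\{p_{1r},p_{2r}\}S^{-1}$, $Q_r=T\,\mathrm{diag}\{q_{1r},q_{2r}\}T^{-1}$ (all entries nonzero). There exists a homeomorphism $f\colon\mathbb CP^1\to\mathbb CP^1$ with $f(P_rv)=Q_rf(v)$ for all $v\in\mathbb CP^1$, $r\in I$, if and only if there exists a complex number $\alpha$ with $\operatorname{Re}\alpha\neq-1$ such that either $$\frac{q_{1r}}{q_{2r}}=\frac{p_{1r}}{p_{2r}}\Bigl|\frac{p_{1r}}{p_{2r}}\Bigr|^{\alpha}\ \text{for all }r\in I,\qquad\text{or}\qquad \frac{q_{1r}}{q_{2r}}=\frac{\overline{p_{1r}}}{\overline{p_{2r}}}\Bigl|\frac{p_{1r}}{p_{2r}}\Bigr|^{\alpha}\ \text{for all }r\in I.$$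
   Context: A matrix $P\in GL(n+1,\mathbb C)$ acts on $\mathbb CP^n$ by the induced linear-fractional (projective) transformation $v\mapsto Pv$ in homogeneous coordinates. For $t>0$, $t^\alpha=e^{\alpha\ln t}$. *)

theory Defs
  imports "HOL-Analysis.Analysis"
begin

text \<open>Points of CP^1: complex lines through 0 in C^2 (with 0 removed).\<close>
definition cproj :: "complex^2 \<Rightarrow> (complex^2) set" where
  "cproj v = {(\<chi> i. c * v $ i) | c. c \<noteq> 0}"

definition CP1 :: "(complex^2) set set" where
  "CP1 = cproj ` (UNIV - {0})"

text \<open>Quotient topology on CP^1 induced by cproj from C^2 minus the origin.\<close>
definition CP1_top :: "(complex^2) set topology" where
  "CP1_top = topology (\<lambda>U. U \<subseteq> CP1 \<and> open {v. v \<noteq> 0 \<and> cproj v \<in> U})"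

lemma istopology_CP1: "istopology (\<lambda>U. U \<subseteq> CP1 \<and> open {v. v \<noteq> 0 \<and> cproj v \<in> U})"
proof -
  have i: "{v. v \<noteq> 0 \<and> cproj v \<in> S \<inter> T} = {v. v \<noteq> 0 \<and> cproj v \<in> S} \<inter> {v. v \<noteq> 0 \<and> cproj v \<in> T}"
    for S T :: "(complex^2) set set" by auto
  have u: "{v. v \<noteq> 0 \<and> cproj v \<in> \<Union>K} = (\<Union>S\<in>K. {v. v \<noteq> 0 \<and> cproj v \<in> S})"
    for K :: "(complex^2) set set set" by auto
  show ?thesis unfolding istopology_def i u by (auto intro: open_Int open_UN)
qed

definition pact :: "complex^2^2 \<Rightarrow> (complex^2) set \<Rightarrow> (complex^2) set" where
  "pact P L = (\<lambda>v. P *v v) ` L"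

definition diag2 :: "complex \<Rightarrow> complex \<Rightarrow> complex^2^2" where
  "diag2 a b = (\<chi> i j. if i = j then (if i = 1 then a else b) else 0)"

definition cpowr :: "real \<Rightarrow> complex \<Rightarrow> complex" where
  "cpowr t \<alpha> = exp (\<alpha> * complex_of_real (ln t))"

end

theory Submission
  imports Defs
begin

text \<open>
  Conjugating by \<open>S\<close> and \<open>T\<close> reduces the theorem to families of diagonal matrices
  \<open>diag(p\<^sub>1, p\<^sub>2)\<close>, which act in the affine chart as multiplication by \<open>\<lambda> = p\<^sub>1/p\<^sub>2\<close>.

  Sufficiency: for \<open>Re \<alpha> > -1\<close> the spiral map \<open>z \<mapsto> z |z|\<^sup>\<alpha>\<close> (or \<open>z\<^sup>* |z|\<^sup>\<alpha>\<close>) extends to a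
  homeomorphism of \<open>CP^1\<close> fixing \<open>\<infinity>\<close> and intertwines multiplication by \<open>\<lambda>\<close> with multiplication
  by \<open>\<lambda> |\<lambda>|\<^sup>\<alpha>\<close>; the case \<open>Re \<alpha> < -1\<close> reduces to this one by composing with the swap
  \<open>[x : y] \<mapsto> [y : x]\<close>, which replaces \<open>\<alpha>\<close> by \<open>-\<alpha> - 2\<close>.

  Necessity: unless all the maps are the identity, a conjugacy preserves or swaps \<open>0\<close> and \<open>\<infinity>\<close>;
  after normalizing, it restricts to a homeomorphism \<open>h\<close> of \<open>\<complex> - {0}\<close> with
  \<open>h (\<lambda> z) = \<mu> h z\<close>.  Lift \<open>h\<close> through \<open>exp\<close> to \<open>H : \<complex> \<rightarrow> \<complex>\<close>.  The translations along which \<open>H\<close>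
  changes by a constant form a group containing \<open>2\<pi>i\<close> and every \<open>Ln \<lambda>\<close>; on it the increments
  are additive and continuous, and Dirichlet's simultaneous approximation shows that they have the
  form \<open>a \<mapsto> \<beta> Re a \<plusminus> i Im a\<close>, with \<open>Re \<beta> \<noteq> 0\<close> because \<open>h\<close> is onto.  Exponentiating at \<open>Ln \<lambda>\<close>
  yields \<open>\<mu> = \<lambda> |\<lambda>|\<^sup>\<beta>\<^sup>-\<^sup>1\<close> or its conjugate version.
\<close>

section \<open>Points of \<open>CP^1\<close> in the affine chart\<close>

definition vec2 :: "complex \<Rightarrow> complex \<Rightarrow> complex^2" where
  "vec2 a b = (\<chi> i. if i = 1 then a else b)"

definition pt :: "complex \<Rightarrow> (complex^2) set" where
  "pt z = cproj (vec2 z 1)"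

definition inf_pt :: "(complex^2) set" where
  "inf_pt = cproj (vec2 1 0)"

lemma vec2_nth [simp]: "vec2 a b $ 1 = a" "vec2 a b $ 2 = b"
  by (simp_all add: vec2_def)

lemma vec2_eq_iff: "vec2 a b = vec2 c d \<longleftrightarrow> a = c \<and> b = d"
  by (metis vec2_nth)

lemma vec2_components: "v = vec2 (v$1) (v$2)"
  by (simp add: vec_eq_iff vec2_def) (metis exhaust_2)

lemma vec2_eq_0_iff: "vec2 a b = 0 \<longleftrightarrow> a = 0 \<and> b = 0"
  by (simp add: vec_eq_iff forall_2)

lemma vec_nonzero_iff: "(v :: complex^2) \<noteq> 0 \<longleftrightarrow> v$1 \<noteq> 0 \<or> v$2 \<noteq> 0"
  by (metis vec2_components vec2_eq_0_iff)

lemma scaleC_vec2: "c *s vec2 a b = vec2 (c*a) (c*b)"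
  by (simp add: vec_eq_iff vector_scalar_mult_def forall_2)

lemma cproj_alt: "cproj v = {c *s v | c. c \<noteq> 0}"
  by (simp add: cproj_def vector_scalar_mult_def)

lemma cproj_eq_iff: "cproj u = cproj v \<longleftrightarrow> (\<exists>c. c \<noteq> 0 \<and> u = c *s v)"
proof
  assume "cproj u = cproj v"
  moreover have "u \<in> cproj u"
    unfolding cproj_alt by (rule CollectI, rule exI[of _ 1]) simp
  ultimately show "\<exists>c. c \<noteq> 0 \<and> u = c *s v" unfolding cproj_alt by blast
next
  assume "\<exists>c. c \<noteq> 0 \<and> u = c *s v"
  then obtain c where c: "c \<noteq> 0" "u = c *s v" by blast
  have "d *s u = (d * c) *s v" "d *s v = (d / c) *s u" for d
    using c by simp_all
  then show "cproj u = cproj v"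
    unfolding cproj_alt using c(1) by (metis (no_types) divide_eq_0_iff mult_eq_0_iff)
qed

lemma cproj_vec2_fin: "b \<noteq> 0 \<Longrightarrow> cproj (vec2 a b) = pt (a/b)"
  unfolding pt_def cproj_eq_iff by (rule exI[of _ b]) (simp add: scaleC_vec2)

lemma cproj_vec2_inf: "a \<noteq> 0 \<Longrightarrow> cproj (vec2 a 0) = inf_pt"
  unfolding inf_pt_def cproj_eq_iff by (rule exI[of _ a]) (simp add: scaleC_vec2)

lemma cproj_cases: "v \<noteq> 0 \<Longrightarrow> cproj v = (if v$2 = 0 then inf_pt else pt (v$1/v$2))"
  using vec2_components[of v] vec_nonzero_iff[of v] cproj_vec2_fin cproj_vec2_inf by metis

lemma pt_inj: "pt a = pt b \<longleftrightarrow> a = b"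
  unfolding pt_def cproj_eq_iff by (auto simp: scaleC_vec2 vec2_eq_iff)

lemma pt_ne_inf [simp]: "pt z \<noteq> inf_pt" "inf_pt \<noteq> pt z"
  unfolding pt_def inf_pt_def cproj_eq_iff by (auto simp: scaleC_vec2 vec2_eq_iff)

lemma pt_CP1 [simp]: "pt z \<in> CP1" and inf_CP1 [simp]: "inf_pt \<in> CP1"
  unfolding pt_def inf_pt_def CP1_def by (auto simp: vec2_eq_0_iff)

lemma CP1_cases: "L \<in> CP1 \<Longrightarrow> L = inf_pt \<or> (\<exists>z. L = pt z)"
  unfolding CP1_def using cproj_cases by auto

lemma openin_CP1: "openin CP1_top U \<longleftrightarrow> U \<subseteq> CP1 \<and> open {v. v \<noteq> 0 \<and> cproj v \<in> U}"
  by (simp add: CP1_top_def istopology_CP1)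

lemma topspace_CP1 [simp]: "topspace CP1_top = CP1"
proof -
  have "{v. v \<noteq> 0 \<and> cproj v \<in> CP1} = - {0}" by (auto simp: CP1_def)
  then have "openin CP1_top CP1" by (simp add: openin_CP1 open_Compl)
  then show ?thesis by (metis openin_CP1 openin_subset openin_topspace subset_antisym)
qed

lemma open_preimage_CP1:
  assumes "openin CP1_top U" "open A" "continuous_on A G" "\<forall>v\<in>A. G v \<noteq> 0"
  shows "open {v\<in>A. cproj (G v) \<in> U}"
proof -
  have "open (G -` {w. w \<noteq> 0 \<and> cproj w \<in> U} \<inter> A)"
    using continuous_on_open_vimage[OF assms(2)] assms(1,3) openin_CP1 by blast
  moreover have "{v\<in>A. cproj (G v) \<in> U} = G -` {w. w \<noteq> 0 \<and> cproj w \<in> U} \<inter> A"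
    using assms(4) by auto
  ultimately show ?thesis by simp
qed

lemma continuous_map_CP1I:
  assumes "\<And>v. v \<noteq> 0 \<Longrightarrow> f (cproj v) \<in> CP1"
    and "\<And>U. openin CP1_top U \<Longrightarrow> open {v. v \<noteq> 0 \<and> f (cproj v) \<in> U}"
  shows "continuous_map CP1_top CP1_top f"
  unfolding continuous_map_def
proof (intro conjI allI impI)
  show "f \<in> topspace CP1_top \<rightarrow> topspace CP1_top"
    using assms(1) by (auto simp: CP1_def)
  fix U assume U: "openin CP1_top U"
  have "{v. v \<noteq> 0 \<and> cproj v \<in> {x \<in> topspace CP1_top. f x \<in> U}} = {v. v \<noteq> 0 \<and> f (cproj v) \<in> U}"
    by (auto simp: CP1_def)
  then show "openin CP1_top {x \<in> topspace CP1_top. f x \<in> U}"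
    using assms(2)[OF U] by (simp add: openin_CP1)
qed

lemma pact_cproj: "pact A (cproj v) = cproj (A *v v)"
proof -
  have "A *v (c *s v) = c *s (A *v v)" for c
    by (simp add: vec_eq_iff matrix_vector_mult_def vector_scalar_mult_def sum_distrib_left
        mult.left_commute)
  moreover have "pact A (cproj v) = {A *v (c *s v) |c. c \<noteq> 0}"
    unfolding pact_def cproj_alt by auto
  ultimately show ?thesis by (simp add: cproj_alt)
qed

lemma pact_comp: "pact A (pact B L) = pact (A ** B) L"
  by (simp add: pact_def image_image matrix_vector_mul_assoc)

lemma pact_id: "pact (mat 1) L = L"
  by (simp add: pact_def)

lemma invertible_mv_nonzero: "invertible (A::complex^2^2) \<Longrightarrow> v \<noteq> 0 \<Longrightarrow> A *v v \<noteq> 0"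
  by (metis inj_matrix_vector_mult injD matrix_vector_mult_0_right)

lemma pact_CP1: "invertible A \<Longrightarrow> L \<in> CP1 \<Longrightarrow> pact A L \<in> CP1"
  unfolding CP1_def using pact_cproj invertible_mv_nonzero by auto

lemma continuous_map_pact:
  assumes "invertible A" shows "continuous_map CP1_top CP1_top (pact A)"
proof (rule continuous_map_CP1I)
  show "pact A (cproj v) \<in> CP1" if "v \<noteq> 0" for v
    using pact_CP1[OF assms] that by (simp add: CP1_def)
next
  fix U assume U: "openin CP1_top U"
  have "open {v\<in>-{0}. cproj (A *v v) \<in> U}"
    by (rule open_preimage_CP1[OF U])
      (use invertible_mv_nonzero[OF assms] in \<open>auto intro: linear_continuous_on\<close>)
  then show "open {v. v \<noteq> 0 \<and> pact A (cproj v) \<in> U}"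
    by (simp add: pact_cproj)
qed

lemma homeomorphic_map_pact:
  assumes "A ** A' = mat 1" "A' ** A = mat 1"
  shows "homeomorphic_map CP1_top CP1_top (pact A)"
proof -
  have "invertible A" "invertible A'" using assms invertible_def by blast+
  then have "homeomorphic_maps CP1_top CP1_top (pact A) (pact A')"
    unfolding homeomorphic_maps_def using assms
    by (simp add: continuous_map_pact pact_comp pact_id)
  then show ?thesis using homeomorphic_map_maps by blast
qed

lemma matrix_inv_mult:
  assumes "invertible (A::complex^2^2)"
  shows "A ** matrix_inv A = mat 1" "matrix_inv A ** A = mat 1"
proof -
  have "\<exists>A'. A ** A' = mat 1 \<and> A' ** A = mat 1" using assms invertible_def by blast
  then have "A ** matrix_inv A = mat 1 \<and> matrix_inv A ** A = mat 1"
    unfolding matrix_inv_def by (rule someI_ex)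
  then show "A ** matrix_inv A = mat 1" "matrix_inv A ** A = mat 1" by auto
qed

lemma matrix_mul_cancel_right: "A' ** A = mat 1 \<Longrightarrow> X ** A' ** A = X"
  by (metis matrix_mul_assoc matrix_mul_rid)

section \<open>Conjugacies and the reduction to diagonal families\<close>

definition conjugacy ::
    "'i set \<Rightarrow> ('i \<Rightarrow> complex^2^2) \<Rightarrow> ('i \<Rightarrow> complex^2^2) \<Rightarrow> ((complex^2) set \<Rightarrow> (complex^2) set) \<Rightarrow> bool"
  where "conjugacy I A B f \<longleftrightarrow> homeomorphic_map CP1_top CP1_top f \<and>
           (\<forall>r\<in>I. \<forall>v\<in>CP1. f (pact (A r) v) = pact (B r) (f v))"

lemma conjugacy_transport:
  assumes M: "M ** M' = mat 1" "M' ** M = mat 1" and N: "N ** N' = mat 1" "N' ** N = mat 1"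
    and f: "conjugacy I A B f"
  shows "conjugacy I (\<lambda>r. M' ** A r ** M) (\<lambda>r. N ** B r ** N') (pact N \<circ> f \<circ> pact M)"
  unfolding conjugacy_def
proof (intro conjI ballI)
  show "homeomorphic_map CP1_top CP1_top (pact N \<circ> f \<circ> pact M)"
    using homeomorphic_map_pact[OF M] homeomorphic_map_pact[OF N] f
    by (auto simp: conjugacy_def intro: homeomorphic_map_compose)
  fix r v assume r: "r \<in> I" and v: "v \<in> CP1"
  have "invertible M" using M invertible_def by blast
  have "pact M (pact (M' ** A r ** M) v) = pact (A r) (pact M v)"
    by (metis pact_comp matrix_mul_assoc matrix_mul_lid M(1))
  moreover have "pact N (pact (B r) w) = pact (N ** B r ** N') (pact N w)" for w
    by (simp add: pact_comp matrix_mul_cancel_right[OF N(2)])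
  ultimately show "(pact N \<circ> f \<circ> pact M) (pact (M' ** A r ** M) v)
      = pact (N ** B r ** N') ((pact N \<circ> f \<circ> pact M) v)"
    using f r pact_CP1[OF \<open>invertible M\<close> v] by (simp add: conjugacy_def)
qed

lemma conjugacy_diagonalize:
  assumes S: "invertible S" and T: "invertible T"
  shows "(\<exists>f. conjugacy I (\<lambda>r. S ** D r ** matrix_inv S) (\<lambda>r. T ** E r ** matrix_inv T) f)
     \<longleftrightarrow> (\<exists>g. conjugacy I D E g)"
proof
  assume "\<exists>f. conjugacy I (\<lambda>r. S ** D r ** matrix_inv S) (\<lambda>r. T ** E r ** matrix_inv T) f"
  then obtain f where "conjugacy I (\<lambda>r. S ** D r ** matrix_inv S) (\<lambda>r. T ** E r ** matrix_inv T) f"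
    by blast
  from conjugacy_transport[OF matrix_inv_mult(1,2)[OF S] matrix_inv_mult(2,1)[OF T] this]
  show "\<exists>g. conjugacy I D E g"
    by (auto simp: matrix_mul_assoc matrix_mul_cancel_right matrix_inv_mult[OF S] matrix_inv_mult[OF T])
next
  assume "\<exists>g. conjugacy I D E g"
  then obtain g where "conjugacy I D E g" by blast
  from conjugacy_transport[OF matrix_inv_mult(2,1)[OF S] matrix_inv_mult(1,2)[OF T] this]
  show "\<exists>f. conjugacy I (\<lambda>r. S ** D r ** matrix_inv S) (\<lambda>r. T ** E r ** matrix_inv T) f"
    by blast
qed

lemma diag2_mv: "diag2 a b *v vec2 x y = vec2 (a*x) (b*y)"
  unfolding vec_eq_iff forall_2 matrix_vector_mult_def sum_2 by (simp add: diag2_def)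

lemma pact_diag2_pt: "b \<noteq> 0 \<Longrightarrow> pact (diag2 a b) (pt z) = pt (a/b*z)"
  using cproj_vec2_fin[of b "a*z"] by (simp add: pt_def pact_cproj diag2_mv)

lemma pact_diag2_inf: "a \<noteq> 0 \<Longrightarrow> pact (diag2 a b) inf_pt = inf_pt"
  using cproj_vec2_inf[of a] by (simp add: inf_pt_def pact_cproj diag2_mv)

lemma pact_diag2_scalar: "b \<noteq> 0 \<Longrightarrow> L \<in> CP1 \<Longrightarrow> pact (diag2 b b) L = L"
  using CP1_cases[of L] by (auto simp: pact_diag2_pt pact_diag2_inf)

lemma pact_diag2_fixed:
  assumes "a \<noteq> b" "b \<noteq> 0" "L \<in> CP1" "pact (diag2 a b) L = L"
  shows "L = pt 0 \<or> L = inf_pt"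
proof -
  have "z = 0" if "L = pt z" for z
  proof -
    have "a / b * z = z" using that assms(2,4) by (simp add: pact_diag2_pt pt_inj)
    then show ?thesis using assms(1,2) by (simp add: field_simps)
  qed
  then show ?thesis using CP1_cases[OF assms(3)] by blast
qed

definition swap_mat :: "complex^2^2" where
  "swap_mat = (\<chi> i j. if i = j then 0 else 1)"

lemma swap_mat_diag2: "swap_mat ** diag2 a b = diag2 b a ** swap_mat"
  unfolding vec_eq_iff forall_2 matrix_matrix_mult_def sum_2 by (simp add: swap_mat_def diag2_def)

lemma swap_mat_swap_mat: "swap_mat ** swap_mat = mat 1"
  unfolding vec_eq_iff forall_2 matrix_matrix_mult_def sum_2 by (simp add: swap_mat_def mat_def)

lemma homeomorphic_map_pact_swap: "homeomorphic_map CP1_top CP1_top (pact swap_mat)"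
  by (rule homeomorphic_map_pact[OF swap_mat_swap_mat swap_mat_swap_mat])

lemma pact_swap_diag2: "pact swap_mat (pact (diag2 a b) L) = pact (diag2 b a) (pact swap_mat L)"
  by (simp add: pact_comp swap_mat_diag2)

lemma swap_mat_mv: "swap_mat *v vec2 x y = vec2 y x"
  unfolding vec_eq_iff forall_2 matrix_vector_mult_def sum_2 by (simp add: swap_mat_def)

lemma pact_swap_pts: "pact swap_mat inf_pt = pt 0" "pact swap_mat (pt 0) = inf_pt"
proof -
  have "pact swap_mat inf_pt = cproj (vec2 0 1)" by (simp add: inf_pt_def pact_cproj swap_mat_mv)
  then show "pact swap_mat inf_pt = pt 0" using cproj_vec2_fin[of 1 0] by simp
  show "pact swap_mat (pt 0) = inf_pt" by (simp add: pt_def inf_pt_def pact_cproj swap_mat_mv)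
qed

definition coord :: "(complex^2) set \<Rightarrow> complex" where
  "coord L = (SOME w. L = pt w)"

lemma coord_pt [simp]: "coord (pt w) = w"
  unfolding coord_def using pt_inj by simp

definition ext_map :: "(complex \<Rightarrow> complex) \<Rightarrow> (complex^2) set \<Rightarrow> (complex^2) set" where
  "ext_map F L = (if L = inf_pt then inf_pt else pt (F (coord L)))"

lemma ext_map_pt [simp]: "ext_map F (pt z) = pt (F z)"
  and ext_map_inf [simp]: "ext_map F inf_pt = inf_pt"
  by (simp_all add: ext_map_def)

lemma ext_map_comp: "L \<in> CP1 \<Longrightarrow> ext_map F (ext_map G L) = ext_map (F \<circ> G) L"
  using CP1_cases[of L] by auto

lemma ext_map_equivariant:
  assumes "a \<noteq> 0" "b \<noteq> 0" "c \<noteq> 0" "d \<noteq> 0" "\<And>z. F (a/b*z) = c/d * F z" "L \<in> CP1"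
  shows "ext_map F (pact (diag2 a b) L) = pact (diag2 c d) (ext_map F L)"
  using CP1_cases[OF assms(6)] assms by (auto simp: pact_diag2_pt pact_diag2_inf)

lemma open_coord_nonzero: "open {v::complex^2. v$i \<noteq> 0}"
  by (intro open_Collect_neq continuous_intros)

lemma continuous_on_vec2 [continuous_intros]:
  assumes "continuous_on S f" "continuous_on S g"
  shows "continuous_on S (\<lambda>x. vec2 (f x) (g x))"
  unfolding vec2_def
proof (rule continuous_on_vec_lambda)
  show "continuous_on S (\<lambda>x. if i = 1 then f x else g x)" for i
    using assms by (cases "i = 1") simp_all
qed

text \<open>\<open>ext_map F\<close> read on nonzero vectors, in the chart around \<open>0\<close> and in the chart \<open>u = 1/z\<close>
  around \<open>\<infinity>\<close>.\<close>
lemma ext_map_cproj: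
  assumes F0: "\<And>z. F z = 0 \<longleftrightarrow> z = 0"
  shows "v$2 \<noteq> 0 \<Longrightarrow> ext_map F (cproj v) = cproj (vec2 (F (v$1/v$2)) 1)"
    and "v$1 \<noteq> 0 \<Longrightarrow> ext_map F (cproj v) = cproj (vec2 1 (inverse (F (inverse (v$2/v$1)))))"
proof -
  show "ext_map F (cproj v) = cproj (vec2 (F (v$1/v$2)) 1)" if "v$2 \<noteq> 0"
    using that cproj_cases[of v] vec_nonzero_iff[of v] by (simp add: pt_def[symmetric])
  show "ext_map F (cproj v) = cproj (vec2 1 (inverse (F (inverse (v$2/v$1)))))" if v1: "v$1 \<noteq> 0"
  proof (cases "v$2 = 0")
    case True
    then show ?thesis
      using v1 cproj_cases[of v] vec_nonzero_iff[of v] F0[of 0] by (simp add: inf_pt_def[symmetric])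
  next
    case False
    have "ext_map F (cproj v) = pt (F (v$1/v$2))"
      using False cproj_cases[of v] vec_nonzero_iff[of v] by simp
    also have "\<dots> = cproj (vec2 1 (inverse (F (v$1/v$2))))"
      unfolding pt_def cproj_eq_iff using F0 v1 False
      by (intro exI[of _ "F (v$1/v$2)"]) (simp add: scaleC_vec2)
    finally show ?thesis by (simp only: inverse_divide)
  qed
qed

lemma continuous_map_ext_map:
  assumes cF: "continuous_on UNIV F" and cF': "continuous_on UNIV (\<lambda>u. inverse (F (inverse u)))"
    and F0: "\<And>z. F z = 0 \<longleftrightarrow> z = 0"
  shows "continuous_map CP1_top CP1_top (ext_map F)"
proof (rule continuous_map_CP1I)
  show "ext_map F (cproj v) \<in> CP1" if "v \<noteq> 0" for v
    using cproj_cases[OF that] by simp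
next
  fix U assume U: "openin CP1_top U"
  define G1 where "G1 v = vec2 (F (v$1/v$2)) 1" for v :: "complex^2"
  define G2 where "G2 v = vec2 1 (inverse (F (inverse (v$2/v$1))))" for v :: "complex^2"
  have "{v. v \<noteq> 0 \<and> ext_map F (cproj v) \<in> U} =
        {v\<in>{v. v$2 \<noteq> 0}. cproj (G1 v) \<in> U} \<union> {v\<in>{v. v$1 \<noteq> 0}. cproj (G2 v) \<in> U}"
  proof (rule set_eqI)
    fix v :: "complex^2"
    show "v \<in> {v. v \<noteq> 0 \<and> ext_map F (cproj v) \<in> U} \<longleftrightarrow>
          v \<in> {v\<in>{v. v$2 \<noteq> 0}. cproj (G1 v) \<in> U} \<union> {v\<in>{v. v$1 \<noteq> 0}. cproj (G2 v) \<in> U}"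
      using ext_map_cproj[OF F0, of v] vec_nonzero_iff[of v] by (auto simp: G1_def G2_def)
  qed
  moreover have "open {v\<in>{v. v$2 \<noteq> 0}. cproj (G1 v) \<in> U}"
  proof (rule open_preimage_CP1[OF U open_coord_nonzero])
    have "continuous_on {v. v$2 \<noteq> 0} (\<lambda>v::complex^2. v$1/v$2)"
      by (intro continuous_intros) auto
    then show "continuous_on {v. v$2 \<noteq> 0} G1"
      unfolding G1_def by (intro continuous_intros continuous_on_compose2[OF cF]) auto
  qed (simp add: G1_def vec2_eq_0_iff)
  moreover have "open {v\<in>{v. v$1 \<noteq> 0}. cproj (G2 v) \<in> U}"
  proof (rule open_preimage_CP1[OF U open_coord_nonzero])
    have "continuous_on {v. v$1 \<noteq> 0} (\<lambda>v::complex^2. v$2/v$1)"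
      by (intro continuous_intros) auto
    then show "continuous_on {v. v$1 \<noteq> 0} G2"
      unfolding G2_def by (intro continuous_intros continuous_on_compose2[OF cF']) auto
  qed (simp add: G2_def vec2_eq_0_iff)
  ultimately show "open {v. v \<noteq> 0 \<and> ext_map F (cproj v) \<in> U}" by (simp only: open_Un)
qed

lemma homeomorphic_map_ext_map:
  assumes "continuous_on UNIV F" "continuous_on UNIV (\<lambda>u. inverse (F (inverse u)))"
    and "\<And>z. F z = 0 \<longleftrightarrow> z = 0"
    and "continuous_on UNIV F'" "continuous_on UNIV (\<lambda>u. inverse (F' (inverse u)))"
    and "\<And>z. F' z = 0 \<longleftrightarrow> z = 0"
    and "\<And>z. F (F' z) = z" "\<And>z. F' (F z) = z"
  shows "homeomorphic_map CP1_top CP1_top (ext_map F)"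
proof -
  have "ext_map id L = L" if "L \<in> CP1" for L
    using CP1_cases[OF that] by auto
  then have "homeomorphic_maps CP1_top CP1_top (ext_map F) (ext_map F')"
    unfolding homeomorphic_maps_def
    using continuous_map_ext_map[OF assms(1-3)] continuous_map_ext_map[OF assms(4-6)]
    by (simp add: ext_map_comp comp_def assms(7,8) id_def)
  then show ?thesis using homeomorphic_map_maps by blast
qed

section \<open>Spiral maps: sufficiency of the condition\<close>

lemma cpowr_nonzero [simp]: "cpowr t a \<noteq> 0"
  by (simp add: cpowr_def)

lemma norm_cpowr: "t > 0 \<Longrightarrow> cmod (cpowr t a) = t powr Re a"
  by (simp add: cpowr_def powr_def mult.commute)

lemma cpowr_mult: "s > 0 \<Longrightarrow> t > 0 \<Longrightarrow> cpowr (s*t) a = cpowr s a * cpowr t a"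
  by (simp add: cpowr_def ln_mult_pos distrib_left exp_add)

lemma cpowr_inverse: "t > 0 \<Longrightarrow> cpowr (inverse t) a = inverse (cpowr t a)"
  by (simp add: cpowr_def ln_inverse exp_minus)

lemma cpowr_add: "cpowr t (a + b) = cpowr t a * cpowr t b"
  by (simp add: cpowr_def distrib_right exp_add)

definition power_map :: "bool \<Rightarrow> complex \<Rightarrow> complex \<Rightarrow> complex" where
  "power_map c a z = (if c then cnj z else z) * cpowr (cmod z) a"

lemma power_map_eq_0_iff: "power_map c a z = 0 \<longleftrightarrow> z = 0"
  by (simp add: power_map_def)

lemma power_map_0 [simp]: "power_map c a 0 = 0"
  by (simp add: power_map_def)

lemma norm_power_map: "cmod (power_map c a z) = cmod z powr (1 + Re a)"
proof (cases "z = 0")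
  case False
  then have "cmod (power_map c a z) = cmod z * cmod z powr Re a"
    by (simp add: power_map_def norm_mult norm_cpowr)
  also have "\<dots> = cmod z powr (1 + Re a)" using False by (simp add: powr_add)
  finally show ?thesis .
qed (simp add: power_map_def)

lemma power_map_mult: "l \<noteq> 0 \<Longrightarrow> power_map c a (l * z) = power_map c a l * power_map c a z"
  by (cases "z = 0") (simp_all add: power_map_def norm_mult cpowr_mult)

lemma power_map_inverse: "power_map c a (inverse u) = inverse (power_map c a u)"
  by (cases "u = 0") (simp_all add: power_map_def norm_inverse cpowr_inverse)

text \<open>For \<open>Re a > -1\<close> the spiral map is continuous at \<open>0\<close>, since \<open>|power_map c a z| = |z|\<^sup>1\<^sup>+\<^sup>R\<^sup>e \<^sup>a\<close>.\<close>
lemma continuous_on_power_map: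
  assumes "Re a > -1" shows "continuous_on UNIV (power_map c a)"
proof -
  have "isCont (power_map c a) z" for z
  proof (cases "z = 0")
    case False
    have "isCont (\<lambda>z. cpowr (cmod z) a) z"
      unfolding cpowr_def using False by (intro continuous_intros) auto
    then show ?thesis unfolding power_map_def by (cases c) (auto intro!: continuous_intros)
  next
    case True
    have "((\<lambda>z. cmod z powr (1 + Re a)) \<longlongrightarrow> 0) (at 0)"
      by (rule tendsto_zero_powrI) (use assms in \<open>auto intro!: tendsto_eq_intros\<close>)
    then have "((\<lambda>z. cmod (power_map c a z)) \<longlongrightarrow> 0) (at 0)"
      by (simp add: norm_power_map)
    then have "(power_map c a \<longlongrightarrow> 0) (at 0)"
      by (simp add: tendsto_norm_zero_iff)
    then show ?thesis using True by (simp add: isCont_def)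
  qed
  then show ?thesis by (simp add: continuous_at_imp_continuous_on)
qed

text \<open>The exponent of the inverse spiral map.\<close>
definition inverse_exponent :: "bool \<Rightarrow> complex \<Rightarrow> complex" where
  "inverse_exponent c a = (if c then - cnj a else - a) / (1 + Re a)"

lemma inverse_exponent_Re: "Re a > -1 \<Longrightarrow> 1 + Re (inverse_exponent c a) = 1 / (1 + Re a)"
  by (cases c) (simp_all add: inverse_exponent_def field_simps)

lemma inverse_exponent_gt: "Re a > -1 \<Longrightarrow> Re (inverse_exponent c a) > -1"
  using inverse_exponent_Re[of a c] by (smt (verit) divide_pos_pos)

lemma inverse_exponent_involution: "Re a > -1 \<Longrightarrow> inverse_exponent c (inverse_exponent c a) = a"
  using inverse_exponent_Re[of a c]
  by (cases c) (auto simp: inverse_exponent_def field_simps complex_eq_iff)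

lemma power_map_inverse_exponent:
  assumes "Re a > -1" shows "power_map c a (power_map c (inverse_exponent c a) z) = z"
proof (cases "z = 0")
  case False
  define b where "b = inverse_exponent c a"
  define L where "L = ln (cmod z)"
  have "ln (cmod (power_map c b z)) = (1 + Re b) * L"
    using False by (simp add: norm_power_map ln_powr L_def)
  also have "1 + Re b = 1 / (1 + Re a)" unfolding b_def by (rule inverse_exponent_Re[OF assms])
  finally have ln_norm: "ln (cmod (power_map c b z)) = L / (1 + Re a)" by simp
  have "power_map c a (power_map c b z)
      = (if c then cnj (power_map c b z) else power_map c b z) * exp (a * of_real (L / (1 + Re a)))"
    unfolding power_map_def[of c a "power_map c b z"] cpowr_def ln_norm ..
  also have "\<dots> = z * exp ((if c then cnj b else b) * of_real L + a * of_real (L / (1 + Re a)))"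
    by (cases c) (simp_all add: power_map_def cpowr_def L_def exp_cnj exp_add)
  also have "(if c then cnj b else b) * of_real L + a * of_real (L / (1 + Re a)) = 0"
    using assms by (cases c) (simp_all add: b_def inverse_exponent_def field_simps)
  finally show ?thesis by (simp add: b_def)
qed (simp add: power_map_def)

lemma homeomorphic_map_power_map:
  assumes "Re a > -1" shows "homeomorphic_map CP1_top CP1_top (ext_map (power_map c a))"
proof (rule homeomorphic_map_ext_map[where F' = "power_map c (inverse_exponent c a)"])
  have b: "Re (inverse_exponent c a) > -1" using inverse_exponent_gt[OF assms] .
  show "continuous_on UNIV (power_map c a)" "continuous_on UNIV (power_map c (inverse_exponent c a))"
    using continuous_on_power_map assms b by blast+
  show "continuous_on UNIV (\<lambda>u. inverse (power_map c a (inverse u)))"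
    "continuous_on UNIV (\<lambda>u. inverse (power_map c (inverse_exponent c a) (inverse u)))"
    using continuous_on_power_map assms b by (simp_all add: power_map_inverse)
  show "power_map c a (power_map c (inverse_exponent c a) z) = z" for z
    using power_map_inverse_exponent assms by blast
  show "power_map c (inverse_exponent c a) (power_map c a z) = z" for z
    using power_map_inverse_exponent[OF b, of c z] inverse_exponent_involution[OF assms] by simp
qed (simp_all add: power_map_eq_0_iff)

lemma conjugacy_swap:
  assumes "conjugacy I A (\<lambda>r. diag2 (a r) (b r)) g"
  shows "conjugacy I A (\<lambda>r. diag2 (b r) (a r)) (pact swap_mat \<circ> g)"
  using assms homeomorphic_map_compose[OF _ homeomorphic_map_pact_swap]
  by (auto simp: conjugacy_def pact_swap_diag2)

text \<open>Reflecting the exponent \<open>a \<mapsto> -a - 2\<close> (and toggling conjugation) inverts the multiplier;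
  this exchanges the cases \<open>Re a > -1\<close> and \<open>Re a < -1\<close>.\<close>
lemma power_map_reflect:
  assumes "l \<noteq> 0"
  shows "inverse (power_map c a l) = power_map (\<not> c) (- a - 2) l"
proof -
  have t: "cmod l > 0" using assms by simp
  have "cpowr (cmod l) (- a - 2) * cpowr (cmod l) a = cpowr (cmod l) (-2)"
    by (simp add: cpowr_add[symmetric])
  also have "\<dots> = inverse (exp (of_real (ln (cmod l))) ^ 2)"
    by (simp add: cpowr_def exp_minus exp_of_nat_mult[symmetric])
  also have "exp (of_real (ln (cmod l))) = of_real (cmod l)"
    using t by (simp add: exp_of_real)
  finally have e: "cpowr (cmod l) (- a - 2) * cpowr (cmod l) a = inverse (of_real (cmod l) ^ 2)" .
  have n: "cnj l * l = of_real (cmod l) ^ 2"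
    using complex_norm_square[of l] by (simp add: mult.commute)
  have "power_map (\<not> c) (- a - 2) l * power_map c a l
     = (cnj l * l) * (cpowr (cmod l) (- a - 2) * cpowr (cmod l) a)"
    by (cases c) (simp_all add: power_map_def algebra_simps)
  also have "\<dots> = 1" using e t n by simp
  finally show ?thesis by (metis inverse_unique mult.commute)
qed

lemma conjugacy_power_map:
  assumes nz: "\<forall>r\<in>I. p1 r \<noteq> 0 \<and> p2 r \<noteq> 0 \<and> q1 r \<noteq> 0 \<and> q2 r \<noteq> 0" and a: "Re a > -1"
    and q: "\<forall>r\<in>I. q1 r / q2 r = power_map c a (p1 r / p2 r)"
  shows "conjugacy I (\<lambda>r. diag2 (p1 r) (p2 r)) (\<lambda>r. diag2 (q1 r) (q2 r)) (ext_map (power_map c a))"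
  unfolding conjugacy_def
proof (intro conjI ballI homeomorphic_map_power_map[OF a])
  fix r v assume r: "r \<in> I" and v: "v \<in> CP1"
  show "ext_map (power_map c a) (pact (diag2 (p1 r) (p2 r)) v)
      = pact (diag2 (q1 r) (q2 r)) (ext_map (power_map c a) v)"
  proof (rule ext_map_equivariant)
    show "power_map c a (p1 r / p2 r * z) = q1 r / q2 r * power_map c a z" for z
      using power_map_mult[of "p1 r / p2 r" c a z] nz q r by simp
  qed (use nz r v in auto)
qed

lemma conjugacy_of_exponent:
  assumes nz: "\<forall>r\<in>I. p1 r \<noteq> 0 \<and> p2 r \<noteq> 0 \<and> q1 r \<noteq> 0 \<and> q2 r \<noteq> 0" and a: "Re a \<noteq> -1"
    and q: "\<forall>r\<in>I. q1 r / q2 r = power_map c a (p1 r / p2 r)"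
  shows "\<exists>g. conjugacy I (\<lambda>r. diag2 (p1 r) (p2 r)) (\<lambda>r. diag2 (q1 r) (q2 r)) g"
proof (cases "Re a > -1")
  case True
  then show ?thesis using conjugacy_power_map[OF nz True q] by blast
next
  case False
  then have a': "Re (- a - 2) > -1" using a by simp
  have "\<forall>r\<in>I. q2 r / q1 r = power_map (\<not> c) (- a - 2) (p1 r / p2 r)"
  proof
    fix r assume r: "r \<in> I"
    have "q2 r / q1 r = inverse (q1 r / q2 r)" by simp
    then have "q2 r / q1 r = inverse (power_map c a (p1 r / p2 r))" "p1 r / p2 r \<noteq> 0"
      using q nz r by simp_all
    then show "q2 r / q1 r = power_map (\<not> c) (- a - 2) (p1 r / p2 r)"
      by (simp add: power_map_reflect)
  qed
  from conjugacy_swap[OF conjugacy_power_map[OF _ a' this]] nz show ?thesis by auto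
qed

section \<open>Continuous characters on groups of periods\<close>

lemma dirichlet_approx_two:
  fixes t1 t2 :: real and N :: nat
  assumes "N > 0"
  obtains m n k :: int where "m > 0" "\<bar>of_int m * t1 - of_int n\<bar> < 1/N" "\<bar>of_int m * t2 - of_int k\<bar> < 1/N"
proof -
  define th :: "nat \<Rightarrow> real" where "th = (\<lambda>i. if i = 0 then t1 else t2)"
  obtain q p where "0 < q" and qp: "\<And>i. i < 2 \<Longrightarrow> \<bar>of_int q * th i - of_int (p i)\<bar> < 1/N"
    using Dirichlet_approx_simult[OF assms, of 2 th] by metis
  then show ?thesis using that[of q "p 0" "p 1"] qp[of 0] qp[of 1] by (simp add: th_def)
qed

text \<open>Such a map only depends, real-linearly, on the real part.\<close>
locale periodic_character =
  fixes G :: "complex set" and E :: "complex \<Rightarrow> complex"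
  assumes add: "\<And>a b. a \<in> G \<Longrightarrow> b \<in> G \<Longrightarrow> a + b \<in> G"
    and E_add: "\<And>a b. a \<in> G \<Longrightarrow> b \<in> G \<Longrightarrow> E (a + b) = E a + E b"
    and neg: "\<And>a. a \<in> G \<Longrightarrow> - a \<in> G"
    and period: "2 * pi * \<i> \<in> G" "E (2 * pi * \<i>) = 0"
    and small: "\<And>e. e > 0 \<Longrightarrow> \<exists>d>0. \<forall>a\<in>G. cmod a < d \<longrightarrow> cmod (E a) < e"
begin

lemma zero: "0 \<in> G" "E 0 = 0"
  using add[OF period(1) neg[OF period(1)]] E_add[of 0 0] by (simp_all add: add[of 0 0])

lemma E_neg: "a \<in> G \<Longrightarrow> E (- a) = - E a"
  using E_add[OF _ neg, of a a] zero by (simp add: eq_neg_iff_add_eq_0 add.commute)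

lemma sub: "a \<in> G \<Longrightarrow> b \<in> G \<Longrightarrow> a - b \<in> G \<and> E (a - b) = E a - E b"
  using add[OF _ neg, of a b] E_add[OF _ neg, of a b] E_neg[of b] by simp

lemma int_mult: "a \<in> G \<Longrightarrow> of_int k * a \<in> G \<and> E (of_int k * a) = of_int k * E a"
proof -
  assume a: "a \<in> G"
  have nat: "of_nat n * a \<in> G \<and> E (of_nat n * a) = of_nat n * E a" for n
    by (induction n) (simp_all add: zero distrib_right add E_add a)
  show ?thesis
  proof (cases "k \<ge> 0")
    case True
    then show ?thesis using nat[of "nat k"] by simp
  next
    case False
    define n where "n = nat (- k)"
    have k: "of_int k = - (of_nat n :: complex)" using False by (simp add: n_def)
    have "- (of_nat n * a) \<in> G" "E (- (of_nat n * a)) = - (of_nat n * E a)"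
      using nat[of n] neg E_neg by auto
    then show ?thesis unfolding k by simp
  qed
qed

text \<open>Integer combinations \<open>m g - n g\<^sub>0 - k 2\<pi>i\<close> with \<open>m > 0\<close> come arbitrarily close to \<open>0\<close> when
  \<open>Re g\<close> is a real multiple of \<open>Re g\<^sub>0\<close> (Dirichlet approximation).\<close>
lemma small_combination:
  assumes g: "g \<in> G" and g0: "g0 \<in> G" and t: "Re g = t * Re g0" and \<delta>: "\<delta> > 0"
  obtains m n :: int and D where "m > 0" "D \<in> G" "E D = of_int m * E g - of_int n * E g0"
    "Re D = of_int m * Re g - of_int n * Re g0" "cmod D < \<delta>"
proof -
  define C where "C = \<bar>Re g0\<bar> + 2 * pi + \<bar>Im g0\<bar>"
  obtain N :: nat where N: "real N > C / \<delta>" using reals_Archimedean2 by blast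
  have "C \<ge> 0" unfolding C_def by simp
  then have N0: "N > 0" using N \<delta> by (metis divide_nonneg_pos not_less of_nat_0_less_iff order_le_less_trans)
  have CN: "C / N < \<delta>" using N N0 \<delta> by (simp add: field_simps)
  define t2 where "t2 = (Im g - t * Im g0) / (2 * pi)"
  obtain m n k :: int where m: "m > 0" and a1: "\<bar>of_int m * t - of_int n\<bar> < 1/N"
    and a2: "\<bar>of_int m * t2 - of_int k\<bar> < 1/N"
    using dirichlet_approx_two[OF N0] by blast
  define D where "D = of_int m * g - of_int n * g0 - of_int k * (2 * pi * \<i>)"
  have "D \<in> G \<and> E D = of_int m * E g - of_int n * E g0"
    using int_mult[OF g, of m] int_mult[OF g0, of n] int_mult[OF period(1), of k] period(2) sub
    unfolding D_def by (metis mult_zero_right diff_zero)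
  moreover have ReD: "Re D = of_int m * Re g - of_int n * Re g0" by (simp add: D_def)
  moreover have "cmod D < \<delta>"
  proof -
    have "Re D = Re g0 * (of_int m * t - of_int n)" using t by (simp add: ReD algebra_simps)
    then have re: "\<bar>Re D\<bar> \<le> \<bar>Re g0\<bar> / N" using a1 by (simp add: abs_mult divide_inverse mult_left_mono)
    have "Im D = 2 * pi * (of_int m * t2 - of_int k) + Im g0 * (of_int m * t - of_int n)"
      by (simp add: D_def t2_def field_simps)
    then have "\<bar>Im D\<bar> \<le> 2 * pi * \<bar>of_int m * t2 - of_int k\<bar> + \<bar>Im g0\<bar> * \<bar>of_int m * t - of_int n\<bar>"
      by (simp add: abs_mult order.trans[OF abs_triangle_ineq])
    also have "\<dots> \<le> 2 * pi * (1/N) + \<bar>Im g0\<bar> * (1/N)"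
      using a1 a2 by (intro add_mono mult_left_mono) auto
    finally have "\<bar>Re D\<bar> + \<bar>Im D\<bar> \<le> C / N" using re by (simp add: C_def add_divide_distrib)
    then show ?thesis using cmod_le[of D] CN by linarith
  qed
  ultimately show ?thesis using that m by blast
qed

lemma linear_on_multiple:
  assumes g: "g \<in> G" and g0: "g0 \<in> G" and t: "Re g = t * Re g0" and \<beta>: "E g0 = \<beta> * of_real (Re g0)"
  shows "E g = \<beta> * of_real (Re g)"
proof -
  have "cmod (E g - \<beta> * of_real (Re g)) < e" if e: "e > 0" for e
  proof -
    obtain d where d: "d > 0" "\<forall>a\<in>G. cmod a < d \<longrightarrow> cmod (E a) < e/2" using small[of "e/2"] e by auto
    define K where "K = cmod \<beta> + 1"
    have K: "K > 0" "cmod \<beta> \<le> K" unfolding K_def by (simp_all add: add_nonneg_pos)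
    define \<delta> where "\<delta> = min d (e / (2 * K))"
    have "\<delta> > 0" using d e K by (simp add: \<delta>_def)
    then obtain m n D where m: "m > 0" and D: "D \<in> G" "E D = of_int m * E g - of_int n * E g0"
      "Re D = of_int m * Re g - of_int n * Re g0" "cmod D < \<delta>"
      using small_combination[OF g g0 t] by metis
    have "cmod \<beta> * \<bar>Re D\<bar> \<le> cmod \<beta> * cmod D" by (simp add: abs_Re_le_cmod mult_left_mono)
    also have "\<dots> \<le> cmod \<beta> * (e / (2 * K))"
      using D(4) by (intro mult_left_mono) (auto simp: \<delta>_def)
    also have "\<dots> \<le> K * (e / (2 * K))"
      using e K by (intro mult_right_mono) auto
    also have "\<dots> = e / 2" using K by simp
    finally have small_Re: "cmod \<beta> * \<bar>Re D\<bar> \<le> e / 2" .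
    have small_E: "cmod (E D) < e / 2" using d D(1,4) by (simp add: \<delta>_def)
    have "of_int m * (E g - \<beta> * of_real (Re g)) = E D - \<beta> * of_real (Re D)"
      unfolding D(2,3) \<beta> by (simp add: algebra_simps)
    then have "cmod (of_int m * (E g - \<beta> * of_real (Re g))) \<le> cmod (E D) + cmod \<beta> * \<bar>Re D\<bar>"
      by (metis norm_triangle_ineq4 norm_mult norm_of_real)
    moreover have "cmod (E g - \<beta> * of_real (Re g)) \<le> cmod (of_int m * (E g - \<beta> * of_real (Re g)))"
      using m by (simp add: norm_mult mult_le_cancel_right1 of_int_abs[symmetric] del: of_int_abs)
    ultimately show ?thesis using small_Re small_E by linarith
  qed
  then have "cmod (E g - \<beta> * of_real (Re g)) = 0"
    by (metis norm_ge_zero order_less_irrefl order_le_less)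
  then show ?thesis by simp
qed

lemma linear_Re: "\<exists>\<beta>. \<forall>a\<in>G. E a = \<beta> * of_real (Re a)"
proof (cases "\<exists>g0\<in>G. Re g0 \<noteq> 0")
  case True
  then obtain g0 where g0: "g0 \<in> G" "Re g0 \<noteq> 0" by blast
  have "E a = E g0 / of_real (Re g0) * of_real (Re a)" if "a \<in> G" for a
    by (rule linear_on_multiple[OF that g0(1), of "Re a / Re g0"]) (use g0 in simp_all)
  then show ?thesis by blast
next
  case False
  have "E a = 0 * of_real (Re a)" if "a \<in> G" for a
    using linear_on_multiple[OF that zero(1), of 0 0] False that zero by simp
  then show ?thesis by blast
qed

end

section \<open>Continuous logarithms and their shift periods\<close>

lemma exp_eq_1_imp_constant:
  fixes \<phi> :: "complex \<Rightarrow> complex"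
  assumes "continuous_on UNIV \<phi>" "\<And>w. exp (\<phi> w) = 1"
  shows "\<phi> w = \<phi> 0"
proof -
  have "\<phi> constant_on UNIV"
  proof (rule continuous_discrete_range_constant[OF connected_UNIV assms(1)])
    fix x :: complex
    show "\<exists>e>0. \<forall>y. y \<in> UNIV \<and> \<phi> y \<noteq> \<phi> x \<longrightarrow> e \<le> cmod (\<phi> y - \<phi> x)"
    proof (intro exI[of _ "2*pi"] conjI allI impI)
      fix y assume y: "y \<in> UNIV \<and> \<phi> y \<noteq> \<phi> x"
      obtain m :: int where m: "Re (\<phi> x) = 0" "Im (\<phi> x) = of_int (2*m) * pi"
        using assms(2)[of x] exp_eq_1 by blast
      obtain n :: int where n: "Re (\<phi> y) = 0" "Im (\<phi> y) = of_int (2*n) * pi"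
        using assms(2)[of y] exp_eq_1 by blast
      have "n \<noteq> m" using y m n by (metis complex_eq_iff)
      then have "2 * pi \<le> 2 * pi * \<bar>of_int n - of_int m\<bar>" by simp
      also have "\<dots> = \<bar>2 * pi * (of_int n - of_int m)\<bar>" by (simp add: abs_mult)
      also have "\<dots> = \<bar>Im (\<phi> y - \<phi> x)\<bar>" using m n by (simp add: algebra_simps)
      also have "\<dots> \<le> cmod (\<phi> y - \<phi> x)" by (rule abs_Im_le_cmod)
      finally show "2 * pi \<le> cmod (\<phi> y - \<phi> x)" .
    qed simp
  qed
  then show ?thesis by (simp add: constant_on_def) (metis)
qed

definition shift_periods :: "(complex \<Rightarrow> complex) \<Rightarrow> complex set" where
  "shift_periods H = {a. \<forall>w. H (w + a) = H w + (H a - H 0)}"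

lemma shift_periodsI:
  fixes H :: "complex \<Rightarrow> complex"
  assumes "continuous_on UNIV H" "\<And>w. exp (H (w + a)) = K * exp (H w)"
  shows "a \<in> shift_periods H"
proof -
  define \<phi> where "\<phi> w = H (w + a) - H w - (H a - H 0)" for w
  have "continuous_on UNIV \<phi>" unfolding \<phi>_def
    by (intro continuous_intros continuous_on_compose2[OF assms(1)]) auto
  moreover have "K = exp (H a) / exp (H 0)" using assms(2)[of 0] by simp
  then have "exp (\<phi> w) = 1" for w by (simp add: \<phi>_def exp_diff assms(2))
  ultimately have "\<phi> w = \<phi> 0" for w by (rule exp_eq_1_imp_constant)
  then have "H (w + a) - H w - (H a - H 0) = 0" for w by (simp add: \<phi>_def)
  then show ?thesis unfolding shift_periods_def by (simp add: right_minus_eq diff_eq_eq add.commute)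
qed

lemma shift_periods_add:
  assumes "a \<in> shift_periods H" "b \<in> shift_periods H"
  shows "a + b \<in> shift_periods H" "H (a + b) - H 0 = (H a - H 0) + (H b - H 0)"
proof -
  have *: "H (w + (a + b)) = H w + (H a - H 0) + (H b - H 0)" for w
  proof -
    have "H (w + (a + b)) = H ((w + a) + b)" by (simp add: add.assoc)
    also have "\<dots> = H (w + a) + (H b - H 0)" using assms(2) by (simp add: shift_periods_def)
    also have "H (w + a) = H w + (H a - H 0)" using assms(1) by (simp add: shift_periods_def)
    finally show ?thesis .
  qed
  from *[of 0] * show "a + b \<in> shift_periods H" by (simp add: shift_periods_def)
  from *[of 0] show "H (a + b) - H 0 = (H a - H 0) + (H b - H 0)" by simp
qed

lemma shift_periods_uminus:
  assumes "a \<in> shift_periods H" shows "- a \<in> shift_periods H"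
proof -
  have *: "H (w - a) = H w - (H a - H 0)" for w
  proof -
    have "H ((w - a) + a) = H (w - a) + (H a - H 0)" using assms unfolding shift_periods_def by blast
    then show ?thesis by (simp add: algebra_simps)
  qed
  from *[of 0] * show ?thesis by (simp add: shift_periods_def)
qed

lemma periodic_character_shift_periods:
  fixes H :: "complex \<Rightarrow> complex" and d :: real
  assumes Hc: "continuous_on UNIV H" and tp: "2 * pi * \<i> \<in> shift_periods H"
    and d: "H (2 * pi * \<i>) - H 0 = of_real d * (2 * pi * \<i>)"
  shows "periodic_character (shift_periods H) (\<lambda>a. (H a - H 0) - \<i> * of_real d * of_real (Im a))"
proof
  fix e :: real assume e: "e > 0"
  define K where "K = \<bar>d\<bar> + 1"
  have K: "K > 0" "\<bar>d\<bar> \<le> K" by (simp_all add: K_def add_nonneg_pos)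
  obtain s where s: "s > 0" "\<And>x. cmod x < s \<Longrightarrow> cmod (H x - H 0) < e/2"
    using Hc e unfolding continuous_on_iff by (metis UNIV_I dist_norm diff_0_right half_gt_zero)
  show "\<exists>\<delta>>0. \<forall>a\<in>shift_periods H. cmod a < \<delta> \<longrightarrow>
      cmod ((H a - H 0) - \<i> * of_real d * of_real (Im a)) < e"
  proof (intro exI[of _ "min s (e / (2 * K))"] conjI ballI impI)
    show "min s (e / (2 * K)) > 0" using s e K by simp
    fix a assume "cmod a < min s (e / (2 * K))"
    then have a: "cmod (H a - H 0) < e/2" "cmod a < e / (2 * K)" using s by auto
    have "\<bar>d\<bar> * \<bar>Im a\<bar> \<le> K * cmod a" using K by (intro mult_mono abs_Im_le_cmod) auto
    also have "\<dots> \<le> K * (e / (2 * K))" using a(2) K by (intro mult_left_mono) auto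
    also have "\<dots> = e / 2" using K by simp
    finally have "\<bar>d\<bar> * \<bar>Im a\<bar> \<le> e / 2" .
    moreover have "cmod ((H a - H 0) - \<i> * of_real d * of_real (Im a)) \<le> cmod (H a - H 0) + \<bar>d\<bar> * \<bar>Im a\<bar>"
      using norm_triangle_ineq4[of "H a - H 0" "\<i> * of_real d * of_real (Im a)"]
      by (simp add: norm_mult)
    ultimately show "cmod ((H a - H 0) - \<i> * of_real d * of_real (Im a)) < e" using a(1) by linarith
  qed
qed (use tp d shift_periods_add shift_periods_uminus in \<open>auto simp: algebra_simps\<close>)

lemma shift_periods_int_mult:
  assumes "a \<in> shift_periods H"
  shows "of_int k * a \<in> shift_periods H \<and> H (of_int k * a) - H 0 = of_int k * (H a - H 0)"
proof -
  have nat: "of_nat n * a \<in> shift_periods H \<and> H (of_nat n * a) - H 0 = of_nat n * (H a - H 0)" for n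
  proof (induction n)
    case 0
    then show ?case by (simp add: shift_periods_def)
  next
    case (Suc n)
    define x where "x = of_nat n * a"
    have IH: "x \<in> shift_periods H" "H x = H 0 + of_nat n * (H a - H 0)"
      using Suc.IH unfolding x_def by (simp_all add: algebra_simps)
    have "of_nat (Suc n) * a = a + x" by (simp add: x_def algebra_simps)
    then show ?case using shift_periods_add[OF assms IH(1)] IH(2) by (simp add: algebra_simps)
  qed
  show ?thesis
  proof (cases "k \<ge> 0")
    case True
    then show ?thesis using nat[of "nat k"] by simp
  next
    case False
    define n where "n = nat (- k)"
    have k: "of_int k * a = - (of_nat n * a)" using False by (simp add: n_def)
    have "H (of_nat n * a + - (of_nat n * a)) - H 0
        = (H (of_nat n * a) - H 0) + (H (- (of_nat n * a)) - H 0)"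
      by (rule shift_periods_add(2)[OF nat[THEN conjunct1] shift_periods_uminus[OF nat[THEN conjunct1]]])
    then have "H (- (of_nat n * a)) - H 0 = - (H (of_nat n * a) - H 0)"
      by (simp add: algebra_simps)
    moreover have "(of_int k :: complex) = - of_nat n" using False by (simp add: n_def)
    ultimately show ?thesis
      unfolding k using nat[of n] shift_periods_uminus[OF nat[THEN conjunct1]] by simp
  qed
qed

text \<open>A continuous logarithm \<open>H\<close> of a map \<open>h\<close> read through \<open>exp\<close> has \<open>2\<pi>i\<close> as a shift period,
  with increment an integer multiple of \<open>2\<pi>i\<close> (the degree of \<open>h\<close>).\<close>
lemma lift_full_turn:
  assumes Hc: "continuous_on UNIV H" and hH: "\<And>w. h (exp w) = exp (H w)"
  shows "2 * pi * \<i> \<in> shift_periods H \<and> (\<exists>n::int. H (2 * pi * \<i>) - H 0 = of_int n * (2 * pi * \<i>))"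
proof
  show tp: "2 * pi * \<i> \<in> shift_periods H"
    by (rule shift_periodsI[OF Hc, of _ 1]) (simp add: hH[symmetric] exp_add)
  have "exp (H (2 * pi * \<i>) - H 0) = 1"
    using hH[of 0] hH[of "2 * pi * \<i>"] by (simp add: exp_diff)
  then obtain n :: int where "Re (H (2 * pi * \<i>) - H 0) = 0" "Im (H (2 * pi * \<i>) - H 0) = of_int (2 * n) * pi"
    using exp_eq_1 by blast
  then show "\<exists>n::int. H (2 * pi * \<i>) - H 0 = of_int n * (2 * pi * \<i>)"
    by (intro exI[of _ n]) (simp add: complex_eq_iff)
qed

text \<open>The lift of a homeomorphism of \<open>\<complex> - {0}\<close> has degree \<open>\<plusminus>1\<close>: composing the degrees of \<open>h\<close> and
  of its inverse gives \<open>1\<close>.\<close>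
lemma lift_degree:
  assumes Hc: "continuous_on UNIV H" and H'c: "continuous_on UNIV H'"
    and hH: "\<And>w. h (exp w) = exp (H w)" and hH': "\<And>w. h' (exp w) = exp (H' w)"
    and inv: "\<And>z. z \<noteq> 0 \<Longrightarrow> h' (h z) = z"
  shows "\<exists>d::real. (d = 1 \<or> d = -1) \<and> 2 * pi * \<i> \<in> shift_periods H \<and>
           H (2 * pi * \<i>) - H 0 = of_real d * (2 * pi * \<i>)"
proof -
  define tp :: complex where "tp = 2 * pi * \<i>"
  obtain n :: int where tp_H: "tp \<in> shift_periods H" and n: "H tp - H 0 = of_int n * tp"
    using lift_full_turn[OF Hc hH] by (auto simp: tp_def)
  obtain n' :: int where tp_H': "tp \<in> shift_periods H'" and n': "H' tp - H' 0 = of_int n' * tp"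
    using lift_full_turn[OF H'c hH'] by (auto simp: tp_def)
  have "H' (H w) - w = H' (H 0) - 0" for w
  proof (rule exp_eq_1_imp_constant)
    show "continuous_on UNIV (\<lambda>w. H' (H w) - w)"
      by (intro continuous_intros continuous_on_compose2[OF H'c Hc]) auto
    show "exp (H' (H w) - w) = 1" for w
      using hH'[of "H w"] hH[of w] inv[of "exp w"] by (simp add: exp_diff)
  qed
  then have "tp + H' (H 0) = H' (H tp)" by (metis add.commute diff_add_cancel diff_zero)
  also have "H tp = H 0 + of_int n * tp" using n by (simp add: algebra_simps)
  also have "H' (H 0 + of_int n * tp) = H' (H 0) + of_int n * (of_int n' * tp)"
    using tp_H' n' shift_periods_int_mult[OF tp_H', of n] unfolding shift_periods_def by simp
  finally have "of_int (n * n') * tp = 1 * tp" by (simp add: algebra_simps)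
  then have "of_int (n * n') = (1::complex)" by (simp add: tp_def)
  then have "n * n' = 1" by (metis of_int_eq_1_iff)
  then have "n = 1 \<or> n = -1" using zmult_eq_1_iff by blast
  then show ?thesis using tp_H n by (intro exI[of _ "of_int n"]) (auto simp: tp_def)
qed

text \<open>If all increments of \<open>H\<close> along its shift periods are purely imaginary and the periods contain
  \<open>2\<pi>i\<close> and some \<open>g\<^sub>0\<close> with \<open>Re g\<^sub>0 \<noteq> 0\<close>, then every \<open>w\<close> is a period translate of a point of a fixed
  compact disc, so \<open>Re \<circ> H\<close> is bounded above.\<close>
lemma Re_bounded_if_imaginary_increments:
  assumes Hc: "continuous_on UNIV H" and tp: "2 * pi * \<i> \<in> shift_periods H"
    and g0: "g0 \<in> shift_periods H" "Re g0 \<noteq> 0"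
    and imag: "\<forall>a\<in>shift_periods H. Re (H a - H 0) = 0"
  shows "\<exists>B. \<forall>w. Re (H w) \<le> B"
proof -
  define R where "R = cmod g0 + 2 * pi"
  have "bounded (H ` cball 0 R)"
    by (intro compact_imp_bounded compact_continuous_image continuous_on_subset[OF Hc]) auto
  then obtain B where B: "\<forall>x\<in>cball 0 R. cmod (H x) \<le> B" by (auto simp: bounded_iff)
  have "Re (H w) \<le> B" for w
  proof -
    define s where "s = Re w / Re g0"
    define t where "t = (Im w - s * Im g0) / (2 * pi)"
    define a where "a = of_int \<lfloor>s\<rfloor> * g0 + of_int \<lfloor>t\<rfloor> * (2 * pi * \<i>)"
    define x where "x = of_real (frac s) * g0 + of_real (frac t) * (2 * pi * \<i>)"
    have a: "a \<in> shift_periods H" unfolding a_def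
      using shift_periods_int_mult[OF g0(1)] shift_periods_int_mult[OF tp] shift_periods_add by blast
    have "Re w = s * Re g0" using g0(2) by (simp add: s_def)
    moreover have "Im w = s * Im g0 + t * (2 * pi)" by (simp add: t_def)
    ultimately have w: "w = x + a"
      by (simp add: complex_eq_iff x_def a_def frac_def algebra_simps)
    have "cmod x \<le> frac s * cmod g0 + frac t * (2 * pi)"
      using norm_triangle_ineq[of "of_real (frac s) * g0" "of_real (frac t) * (2 * pi * \<i>)"]
      by (simp add: x_def norm_mult frac_ge_0)
    also have "\<dots> \<le> 1 * cmod g0 + 1 * (2 * pi)"
      by (intro add_mono mult_right_mono) (auto simp: frac_lt_1 less_imp_le)
    finally have "x \<in> cball 0 R" by (simp add: R_def)
    have "H w = H x + (H a - H 0)" using a unfolding w shift_periods_def by blast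
    then have "Re (H w) = Re (H x)" using a imag by simp
    also have "\<dots> \<le> cmod (H x)" by (rule complex_Re_le_cmod)
    also have "\<dots> \<le> B" using B \<open>x \<in> cball 0 R\<close> by blast
    finally show ?thesis .
  qed
  then show ?thesis by blast
qed

lemma lift_increment_form:
  assumes Hc: "continuous_on UNIV H" and H'c: "continuous_on UNIV H'"
    and hH: "\<And>w. h (exp w) = exp (H w)" and hH': "\<And>w. h' (exp w) = exp (H' w)"
    and inv: "\<And>z. z \<noteq> 0 \<Longrightarrow> h' z \<noteq> 0 \<and> h (h' z) = z \<and> h' (h z) = z"
  shows "\<exists>\<beta> (d::real). Re \<beta> \<noteq> 0 \<and> (d = 1 \<or> d = -1) \<and>
           (\<forall>a\<in>shift_periods H. H a - H 0 = \<beta> * of_real (Re a) + \<i> * of_real d * of_real (Im a))"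
proof -
  obtain d :: real where d: "d = 1 \<or> d = -1" and tp: "2 * pi * \<i> \<in> shift_periods H"
    and incr: "H (2 * pi * \<i>) - H 0 = of_real d * (2 * pi * \<i>)"
    using lift_degree[OF Hc H'c hH hH'] inv by blast
  interpret periodic_character "shift_periods H" "\<lambda>a. (H a - H 0) - \<i> * of_real d * of_real (Im a)"
    by (rule periodic_character_shift_periods[OF Hc tp incr])
  obtain \<beta> where \<beta>: "\<forall>a\<in>shift_periods H. H a - H 0 = \<beta> * of_real (Re a) + \<i> * of_real d * of_real (Im a)"
    using linear_Re by (metis diff_eq_eq)
  show ?thesis
  proof (cases "\<exists>g0\<in>shift_periods H. Re g0 \<noteq> 0")
    case True
    then obtain g0 where g0: "g0 \<in> shift_periods H" "Re g0 \<noteq> 0" by blast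
    have "Re \<beta> \<noteq> 0"
    proof
      assume "Re \<beta> = 0"
      then have "\<forall>a\<in>shift_periods H. Re (H a - H 0) = 0" using \<beta> by simp
      then obtain B where B: "\<forall>w. Re (H w) \<le> B"
        using Re_bounded_if_imaginary_increments[OF Hc tp g0] by blast
      define z where "z = exp (of_real (B + 1) :: complex)"
      have "z \<noteq> 0" by (simp add: z_def)
      then have "exp (H (Ln (h' z))) = z" using inv hH[of "Ln (h' z)"] by simp
      then have "exp (Re (H (Ln (h' z)))) = exp (B + 1)"
        by (metis exp_of_real norm_exp_eq_Re norm_of_real z_def exp_ge_zero abs_of_nonneg)
      then show False using B[rule_format, of "Ln (h' z)"] by simp
    qed
    then show ?thesis using \<beta> d by blast
  next
    case False
    then show ?thesis using \<beta> d by (intro exI[of _ 1] exI[of _ d]) auto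
  qed
qed

lemma multiplier_shift_period:
  assumes Hc: "continuous_on UNIV H" and hH: "\<And>w. h (exp w) = exp (H w)"
    and l: "l \<noteq> 0" and equiv: "\<And>z. z \<noteq> 0 \<Longrightarrow> h (l * z) = \<mu> * h z"
  shows "Ln l \<in> shift_periods H" "\<mu> = exp (H (Ln l) - H 0)"
proof -
  have el: "exp (Ln l) = l" using l by simp
  show "Ln l \<in> shift_periods H"
  proof (rule shift_periodsI[OF Hc])
    show "exp (H (w + Ln l)) = \<mu> * exp (H w)" for w
      using equiv[of "exp w"] by (simp add: hH[symmetric] exp_add el mult.commute)
  qed
  have "exp (H (Ln l)) = \<mu> * exp (H 0)" using equiv[of 1] hH[of 0] hH[of "Ln l"] el by simp
  then show "\<mu> = exp (H (Ln l) - H 0)" by (simp add: exp_diff)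
qed

section \<open>Necessity of the condition\<close>

lemma continuous_map_pt: "continuous_map euclidean CP1_top pt"
  unfolding continuous_map_def
proof (intro conjI allI impI)
  show "pt \<in> topspace euclidean \<rightarrow> topspace CP1_top" by simp
  fix U assume U: "openin CP1_top U"
  have "open {z\<in>UNIV. cproj (vec2 z 1) \<in> U}"
    by (rule open_preimage_CP1[OF U open_UNIV]) (simp_all add: vec2_eq_0_iff continuous_on_vec2)
  then show "openin euclidean {x \<in> topspace euclidean. pt x \<in> U}" by (simp add: pt_def)
qed

lemma continuous_map_coord: "continuous_map (subtopology CP1_top (CP1 - {inf_pt})) euclidean coord"
  unfolding continuous_map_def
proof (intro conjI allI impI)
  show "coord \<in> topspace (subtopology CP1_top (CP1 - {inf_pt})) \<rightarrow> topspace euclidean" by auto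
  fix V :: "complex set" assume V: "openin euclidean V"
  define W where "W = {L\<in>CP1. L \<noteq> inf_pt \<and> coord L \<in> V}"
  have "v \<noteq> 0 \<and> cproj v \<in> W \<longleftrightarrow> v \<in> {v. v$2 \<noteq> 0} \<and> v$1/v$2 \<in> V" for v :: "complex^2"
  proof (cases "v$2 = 0")
    case True
    then have "v \<noteq> 0 \<Longrightarrow> cproj v = inf_pt" using cproj_cases[of v] by simp
    then show ?thesis using True by (auto simp: W_def)
  next
    case False
    then have "v \<noteq> 0" "cproj v = pt (v$1/v$2)" using cproj_cases[of v] vec_nonzero_iff[of v] by auto
    then show ?thesis using False by (simp add: W_def)
  qed
  then have "{v. v \<noteq> 0 \<and> cproj v \<in> W} = (\<lambda>v. v$1/v$2) -` V \<inter> {v. v$2 \<noteq> 0}" by auto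
  moreover have "continuous_on {v::complex^2. v$2 \<noteq> 0} (\<lambda>v. v$1/v$2)"
    by (intro continuous_intros) auto
  moreover have "open ((\<lambda>v. v$1/v$2) -` V \<inter> {v::complex^2. v$2 \<noteq> 0})"
    using continuous_on_open_vimage[OF open_coord_nonzero] V calculation(2) by auto
  ultimately have "openin CP1_top W" by (simp add: openin_CP1 W_def)
  moreover have "{x \<in> topspace (subtopology CP1_top (CP1 - {inf_pt})). coord x \<in> V} = W \<inter> (CP1 - {inf_pt})"
    by (auto simp: W_def)
  ultimately show "openin (subtopology CP1_top (CP1 - {inf_pt}))
      {x \<in> topspace (subtopology CP1_top (CP1 - {inf_pt})). coord x \<in> V}"
    by (auto simp: openin_subtopology)
qed

definition chart_map :: "((complex^2) set \<Rightarrow> (complex^2) set) \<Rightarrow> complex \<Rightarrow> complex" where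
  "chart_map g z = coord (g (pt z))"

lemma continuous_on_chart_map:
  assumes "continuous_map CP1_top CP1_top g" "\<And>z. z \<in> S \<Longrightarrow> g (pt z) \<noteq> inf_pt"
  shows "continuous_on S (chart_map g)"
proof -
  have "continuous_map (top_of_set S) CP1_top (g \<circ> pt)"
    by (rule continuous_map_compose[OF continuous_map_from_subtopology[OF continuous_map_pt] assms(1)])
  moreover have "(g \<circ> pt) \<in> topspace (top_of_set S) \<rightarrow> CP1 - {inf_pt}"
    using assms unfolding continuous_map_def by auto
  ultimately have "continuous_map (top_of_set S) (subtopology CP1_top (CP1 - {inf_pt})) (g \<circ> pt)"
    by (rule continuous_map_into_subtopology)
  then have "continuous_map (top_of_set S) euclidean (coord \<circ> (g \<circ> pt))"
    by (rule continuous_map_compose[OF _ continuous_map_coord])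
  then show ?thesis by (simp add: chart_map_def comp_def)
qed

lemma chart_map_punctured:
  assumes g: "homeomorphic_map CP1_top CP1_top g" and g0: "g (pt 0) = pt 0" and ginf: "g inf_pt = inf_pt"
  shows "continuous_on (-{0}) (chart_map g)"
    and "\<And>z. z \<noteq> 0 \<Longrightarrow> g (pt z) = pt (chart_map g z) \<and> chart_map g z \<noteq> 0"
proof -
  have inj: "inj_on g CP1" and gC: "g ` CP1 = CP1"
    using g homeomorphic_imp_injective_map homeomorphic_imp_surjective_map by fastforce+
  show *: "g (pt z) = pt (chart_map g z) \<and> chart_map g z \<noteq> 0" if "z \<noteq> 0" for z
  proof -
    have "pt z \<noteq> inf_pt" "pt z \<noteq> pt 0" using that by (simp_all add: pt_inj)
    then have "g (pt z) \<noteq> g inf_pt" "g (pt z) \<noteq> g (pt 0)"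
      using inj_onD[OF inj] pt_CP1 inf_CP1 by metis+
    then have "g (pt z) \<noteq> inf_pt" "g (pt z) \<noteq> pt 0" unfolding g0 ginf .
    moreover have "g (pt z) \<in> CP1" using gC pt_CP1[of z] by blast
    ultimately obtain w where "g (pt z) = pt w" "w \<noteq> 0" using CP1_cases by blast
    then show ?thesis by (simp add: chart_map_def)
  qed
  show "continuous_on (-{0}) (chart_map g)"
    using g * by (intro continuous_on_chart_map) (auto simp: homeomorphic_imp_continuous_map)
qed

lemma exp_lift:
  fixes h :: "complex \<Rightarrow> complex"
  assumes "continuous_on (-{0}) h" "\<And>z. z \<noteq> 0 \<Longrightarrow> h z \<noteq> 0"
  obtains H where "continuous_on UNIV H" "\<And>w. h (exp w) = exp (H w)"
proof -
  have "continuous_on UNIV (\<lambda>w. h (exp w))"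
    by (rule continuous_on_compose2[OF assms(1) continuous_on_exp[OF continuous_on_id]]) auto
  then obtain H where "continuous_on UNIV H" "\<And>w. w \<in> UNIV \<Longrightarrow> h (exp w) = exp (H w)"
    using continuous_logarithm_on_contractible[of UNIV "\<lambda>w. h (exp w)"] assms(2) by auto
  then show ?thesis using that by blast
qed

lemma exp_increment_eq_power_map:
  assumes "l \<noteq> 0" "d = 1 \<or> d = -1"
  shows "exp (\<beta> * of_real (Re (Ln l)) + \<i> * of_real d * of_real (Im (Ln l)))
         = power_map (d = -1) (\<beta> - 1) l"
proof -
  define L where "L = Ln l"
  have el: "exp L = l" and rl: "ln (cmod l) = Re L" using assms(1) by (simp_all add: L_def)
  have "(if d = -1 then cnj l else l) = exp (of_real (Re L) + \<i> * of_real d * of_real (Im L))"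
    using assms(2)
  proof
    assume "d = 1"
    moreover have "of_real (Re L) + \<i> * of_real (Im L) = L" by (rule complex_eq[symmetric])
    ultimately show ?thesis using el by simp
  next
    assume d: "d = -1"
    have "cnj l = exp (cnj L)" using el exp_cnj[of L] by simp
    also have "cnj L = of_real (Re L) + \<i> * of_real d * of_real (Im L)" using d by (simp add: complex_eq_iff)
    finally show ?thesis using d by simp
  qed
  then have "power_map (d = -1) (\<beta> - 1) l
      = exp (of_real (Re L) + \<i> * of_real d * of_real (Im L) + (\<beta> - 1) * of_real (Re L))"
    by (simp add: power_map_def cpowr_def rl exp_add)
  also have "of_real (Re L) + \<i> * of_real d * of_real (Im L) + (\<beta> - 1) * of_real (Re L)
      = \<beta> * of_real (Re L) + \<i> * of_real d * of_real (Im L)" by (simp add: algebra_simps)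
  finally show ?thesis by (simp add: L_def)
qed

text \<open>The chart map of a homeomorphism fixing \<open>0\<close> and \<open>\<infinity>\<close> is a homeomorphism of \<open>\<complex> - {0}\<close>: its
  inverse is the chart map of the inverse homeomorphism.\<close>
lemma chart_map_inverse:
  assumes g: "homeomorphic_map CP1_top CP1_top g" and g0: "g (pt 0) = pt 0" and ginf: "g inf_pt = inf_pt"
  obtains h' where "continuous_on (-{0}) h'"
    "\<And>z. z \<noteq> 0 \<Longrightarrow> h' z \<noteq> 0 \<and> chart_map g (h' z) = z \<and> h' (chart_map g z) = z"
proof -
  obtain g' where maps: "homeomorphic_maps CP1_top CP1_top g g'"
    using g homeomorphic_map_maps by blast
  have g': "homeomorphic_map CP1_top CP1_top g'"
    using maps homeomorphic_maps_imp_map homeomorphic_maps_sym by blast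
  have g'g: "g' (g x) = x" and gg': "g (g' x) = x" if "x \<in> CP1" for x
    using maps that by (simp_all add: homeomorphic_maps_def)
  have g'0: "g' (pt 0) = pt 0" and g'inf: "g' inf_pt = inf_pt"
    using g'g[of "pt 0"] g'g[of inf_pt] g0 ginf by simp_all
  note h = chart_map_punctured[OF g g0 ginf] and h' = chart_map_punctured[OF g' g'0 g'inf]
  have "chart_map g' z \<noteq> 0 \<and> chart_map g (chart_map g' z) = z \<and> chart_map g' (chart_map g z) = z"
    if z: "z \<noteq> 0" for z
  proof -
    have "pt (chart_map g (chart_map g' z)) = pt z"
      using h(2)[of "chart_map g' z"] h'(2)[OF z] gg'[of "pt z"] by simp
    moreover have "pt (chart_map g' (chart_map g z)) = pt z"
      using h'(2)[of "chart_map g z"] h(2)[OF z] g'g[of "pt z"] by simp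
    ultimately show ?thesis using h'(2)[OF z] by (simp add: pt_inj)
  qed
  then show ?thesis using that h'(1) by blast
qed

lemma chart_map_equivariant:
  assumes conj: "conjugacy I (\<lambda>r. diag2 (p1 r) (p2 r)) (\<lambda>r. diag2 (q1 r) (q2 r)) g"
    and h: "\<And>z. z \<noteq> 0 \<Longrightarrow> g (pt z) = pt (chart_map g z)"
    and r: "r \<in> I" and nz: "p1 r \<noteq> 0" "p2 r \<noteq> 0" "q2 r \<noteq> 0" and z: "z \<noteq> 0"
  shows "chart_map g (p1 r / p2 r * z) = q1 r / q2 r * chart_map g z"
proof -
  have "pt (chart_map g (p1 r / p2 r * z)) = g (pact (diag2 (p1 r) (p2 r)) (pt z))"
    using h[of "p1 r / p2 r * z"] nz z by (simp add: pact_diag2_pt)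
  also have "\<dots> = pact (diag2 (q1 r) (q2 r)) (g (pt z))"
    using conj r by (simp add: conjugacy_def)
  also have "\<dots> = pt (q1 r / q2 r * chart_map g z)"
    using h[OF z] nz by (simp add: pact_diag2_pt)
  finally show ?thesis by (simp add: pt_inj)
qed

lemma exponent_of_normalized_conjugacy:
  assumes conj: "conjugacy I (\<lambda>r. diag2 (p1 r) (p2 r)) (\<lambda>r. diag2 (q1 r) (q2 r)) g"
    and nz: "\<forall>r\<in>I. p1 r \<noteq> 0 \<and> p2 r \<noteq> 0 \<and> q1 r \<noteq> 0 \<and> q2 r \<noteq> 0"
    and g0: "g (pt 0) = pt 0" and ginf: "g inf_pt = inf_pt"
  shows "\<exists>\<alpha> c. Re \<alpha> \<noteq> -1 \<and> (\<forall>r\<in>I. q1 r / q2 r = power_map c \<alpha> (p1 r / p2 r))"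
proof -
  have g: "homeomorphic_map CP1_top CP1_top g" using conj by (simp add: conjugacy_def)
  note h = chart_map_punctured[OF g g0 ginf]
  obtain h' where h'c: "continuous_on (-{0}) h'"
    and inv: "\<And>z. z \<noteq> 0 \<Longrightarrow> h' z \<noteq> 0 \<and> chart_map g (h' z) = z \<and> h' (chart_map g z) = z"
    using chart_map_inverse[OF g g0 ginf] by blast
  obtain H where Hc: "continuous_on UNIV H" and hH: "\<And>w. chart_map g (exp w) = exp (H w)"
    using exp_lift[OF h(1)] h(2) by blast
  obtain H' where H'c: "continuous_on UNIV H'" and hH': "\<And>w. h' (exp w) = exp (H' w)"
    using exp_lift[OF h'c] inv by blast
  obtain \<beta> and d :: real where \<beta>: "Re \<beta> \<noteq> 0" and d: "d = 1 \<or> d = -1"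
    and incr: "\<forall>a\<in>shift_periods H. H a - H 0 = \<beta> * of_real (Re a) + \<i> * of_real d * of_real (Im a)"
    using lift_increment_form[OF Hc H'c hH hH' inv] by blast
  have "q1 r / q2 r = power_map (d = -1) (\<beta> - 1) (p1 r / p2 r)" if r: "r \<in> I" for r
  proof -
    have l: "p1 r / p2 r \<noteq> 0" using nz r by simp
    have "chart_map g (p1 r / p2 r * z) = q1 r / q2 r * chart_map g z" if "z \<noteq> 0" for z
      using chart_map_equivariant[OF conj _ r _ _ _ that] h(2) nz r by auto
    note period = multiplier_shift_period[OF Hc hH l this]
    then show ?thesis using incr exp_increment_eq_power_map[OF l d] by simp
  qed
  moreover have "Re (\<beta> - 1) \<noteq> -1" using \<beta> by simp
  ultimately show ?thesis by blast
qed

lemma conjugacy_scalar_iff: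
  assumes conj: "conjugacy I (\<lambda>r. diag2 (p1 r) (p2 r)) (\<lambda>r. diag2 (q1 r) (q2 r)) g"
    and r: "r \<in> I" and nz: "p2 r \<noteq> 0" "q2 r \<noteq> 0"
  shows "p1 r = p2 r \<longleftrightarrow> q1 r = q2 r"
proof -
  have g: "homeomorphic_map CP1_top CP1_top g" using conj by (simp add: conjugacy_def)
  have inj: "inj_on g CP1" and surj: "g ` CP1 = CP1"
    using g homeomorphic_imp_injective_map homeomorphic_imp_surjective_map by fastforce+
  have comm: "g (pact (diag2 (p1 r) (p2 r)) v) = pact (diag2 (q1 r) (q2 r)) (g v)" if "v \<in> CP1" for v
    using conj r that by (simp add: conjugacy_def)
  show ?thesis
  proof
    assume p: "p1 r = p2 r"
    obtain v where v: "v \<in> CP1" "g v = pt 1" using surj pt_CP1[of 1] by (metis imageE)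
    have "pt (q1 r / q2 r * 1) = pact (diag2 (q1 r) (q2 r)) (g v)" using v nz by (simp add: pact_diag2_pt)
    also have "\<dots> = g v" using comm[OF v(1)] pact_diag2_scalar[OF nz(1) v(1)] p by simp
    finally show "q1 r = q2 r" using v nz by (simp add: pt_inj)
  next
    assume q: "q1 r = q2 r"
    have "g (pt 1) \<in> CP1" using surj pt_CP1[of 1] by blast
    then have "g (pact (diag2 (p1 r) (p2 r)) (pt 1)) = g (pt 1)"
      using comm[OF pt_CP1] pact_diag2_scalar[OF nz(2)] q by simp
    then have "pt (p1 r / p2 r * 1) = pt 1"
      using inj_onD[OF inj] pact_diag2_pt[OF nz(1)] pt_CP1 by metis
    then show "p1 r = p2 r" using nz by (simp add: pt_inj)
  qed
qed

text \<open>If some \<open>P r\<close> is not scalar, a conjugacy must preserve or exchange its two fixed points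
  \<open>0\<close> and \<open>\<infinity>\<close>.\<close>
lemma conjugacy_fixed_points:
  assumes conj: "conjugacy I (\<lambda>r. diag2 (p1 r) (p2 r)) (\<lambda>r. diag2 (q1 r) (q2 r)) g"
    and r: "r \<in> I" and p: "p1 r \<noteq> p2 r" and nz: "p1 r \<noteq> 0" "p2 r \<noteq> 0" "q2 r \<noteq> 0"
  shows "(g (pt 0) = pt 0 \<and> g inf_pt = inf_pt) \<or> (g (pt 0) = inf_pt \<and> g inf_pt = pt 0)"
proof -
  have g: "homeomorphic_map CP1_top CP1_top g" using conj by (simp add: conjugacy_def)
  have inj: "inj_on g CP1" and surj: "g ` CP1 = CP1"
    using g homeomorphic_imp_injective_map homeomorphic_imp_surjective_map by fastforce+
  have q: "q1 r \<noteq> q2 r" using conjugacy_scalar_iff[OF conj r nz(2,3)] p by simp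
  have fixed: "g L = pt 0 \<or> g L = inf_pt" if "L \<in> CP1" "pact (diag2 (p1 r) (p2 r)) L = L" for L
  proof (rule pact_diag2_fixed[OF q nz(3)])
    show "g L \<in> CP1" using surj that(1) by blast
    have "g (pact (diag2 (p1 r) (p2 r)) L) = pact (diag2 (q1 r) (q2 r)) (g L)"
      using conj r that(1) by (simp add: conjugacy_def)
    then show "pact (diag2 (q1 r) (q2 r)) (g L) = g L" using that(2) by simp
  qed
  have "g (pt 0) = pt 0 \<or> g (pt 0) = inf_pt" by (rule fixed) (simp_all add: pact_diag2_pt nz)
  moreover have "g inf_pt = pt 0 \<or> g inf_pt = inf_pt" by (rule fixed) (simp_all add: pact_diag2_inf nz)
  moreover have "g (pt 0) \<noteq> g inf_pt" using inj_onD[OF inj] pt_CP1 inf_CP1 pt_ne_inf by metis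
  ultimately show ?thesis by auto
qed

lemma exponent_of_conjugacy:
  assumes conj: "conjugacy I (\<lambda>r. diag2 (p1 r) (p2 r)) (\<lambda>r. diag2 (q1 r) (q2 r)) g"
    and nz: "\<forall>r\<in>I. p1 r \<noteq> 0 \<and> p2 r \<noteq> 0 \<and> q1 r \<noteq> 0 \<and> q2 r \<noteq> 0"
  shows "\<exists>\<alpha> c. Re \<alpha> \<noteq> -1 \<and> (\<forall>r\<in>I. q1 r / q2 r = power_map c \<alpha> (p1 r / p2 r))"
proof (cases "\<forall>r\<in>I. p1 r = p2 r")
  case True
  then have "\<forall>r\<in>I. q1 r / q2 r = power_map False 0 (p1 r / p2 r)"
    using conjugacy_scalar_iff[OF conj] nz by (simp add: power_map_def cpowr_def)
  then show ?thesis by force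
next
  case False
  then obtain r0 where r0: "r0 \<in> I" "p1 r0 \<noteq> p2 r0" by blast
  from conjugacy_fixed_points[OF conj r0] nz r0(1)
  consider "g (pt 0) = pt 0" "g inf_pt = inf_pt" | "g (pt 0) = inf_pt" "g inf_pt = pt 0" by auto
  then show ?thesis
  proof cases
    case 1
    then show ?thesis using exponent_of_normalized_conjugacy[OF conj nz] by blast
  next
    case 2
    have "\<forall>r\<in>I. p1 r \<noteq> 0 \<and> p2 r \<noteq> 0 \<and> q2 r \<noteq> 0 \<and> q1 r \<noteq> 0" using nz by auto
    from exponent_of_normalized_conjugacy[OF conjugacy_swap[OF conj] this]
    obtain \<alpha> c where \<alpha>: "Re \<alpha> \<noteq> -1" and q: "\<forall>r\<in>I. q2 r / q1 r = power_map c \<alpha> (p1 r / p2 r)"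
      using 2 by (auto simp: pact_swap_pts)
    have "q1 r / q2 r = power_map (\<not> c) (- \<alpha> - 2) (p1 r / p2 r)" if r: "r \<in> I" for r
    proof -
      have "q1 r / q2 r = inverse (q2 r / q1 r)" by simp
      then show ?thesis using q r nz by (simp add: power_map_reflect)
    qed
    moreover have "Re (- \<alpha> - 2) \<noteq> -1" using \<alpha> by simp
    ultimately show ?thesis by blast
  qed
qed

theorem theorem6p1:
  fixes I :: "'i set"
    and S T :: "complex^2^2"
    and p1 p2 q1 q2 :: "'i \<Rightarrow> complex"
  assumes "invertible S" and "invertible T"
    and "\<forall>r\<in>I. p1 r \<noteq> 0 \<and> p2 r \<noteq> 0 \<and> q1 r \<noteq> 0 \<and> q2 r \<noteq> 0"
  shows "(\<exists>f. homeomorphic_map CP1_top CP1_top f \<and>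
            (\<forall>r\<in>I. \<forall>v\<in>CP1.
               f (pact (S ** diag2 (p1 r) (p2 r) ** matrix_inv S) v)
                 = pact (T ** diag2 (q1 r) (q2 r) ** matrix_inv T) (f v)))
     \<longleftrightarrow>
     (\<exists>\<alpha>::complex. Re \<alpha> \<noteq> -1 \<and>
        ((\<forall>r\<in>I. q1 r / q2 r = (p1 r / p2 r) * cpowr (cmod (p1 r / p2 r)) \<alpha>) \<or>
         (\<forall>r\<in>I. q1 r / q2 r = (cnj (p1 r) / cnj (p2 r)) * cpowr (cmod (p1 r / p2 r)) \<alpha>)))"
proof -
  have "(\<exists>f. homeomorphic_map CP1_top CP1_top f \<and>
            (\<forall>r\<in>I. \<forall>v\<in>CP1.
               f (pact (S ** diag2 (p1 r) (p2 r) ** matrix_inv S) v)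
                 = pact (T ** diag2 (q1 r) (q2 r) ** matrix_inv T) (f v)))
      \<longleftrightarrow> (\<exists>g. conjugacy I (\<lambda>r. diag2 (p1 r) (p2 r)) (\<lambda>r. diag2 (q1 r) (q2 r)) g)"
    using conjugacy_diagonalize[OF assms(1,2)] by (simp add: conjugacy_def)
  also have "\<dots> \<longleftrightarrow> (\<exists>\<alpha> c. Re \<alpha> \<noteq> -1 \<and> (\<forall>r\<in>I. q1 r / q2 r = power_map c \<alpha> (p1 r / p2 r)))"
    using exponent_of_conjugacy[OF _ assms(3)] conjugacy_of_exponent[OF assms(3)] by blast
  also have "\<dots> \<longleftrightarrow> (\<exists>\<alpha>::complex. Re \<alpha> \<noteq> -1 \<and>
        ((\<forall>r\<in>I. q1 r / q2 r = (p1 r / p2 r) * cpowr (cmod (p1 r / p2 r)) \<alpha>) \<or>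
         (\<forall>r\<in>I. q1 r / q2 r = (cnj (p1 r) / cnj (p2 r)) * cpowr (cmod (p1 r / p2 r)) \<alpha>)))"
    by (simp add: ex_bool_eq power_map_def) blast
  finally show ?thesis .
qed

end
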